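(* Let $k\ge 4$ be an integer. For every tree $T$ of order $n\ge k$, $W_{tsp,k}(T)=2W_k(T)$. If $G$ is a finite simple connected graph of order $n\ge k$ that is not a tree, then $W_{tsp,k}(G)<2W_k(G)$.
   Context: For a set $S$ of $k$ vertices of a connected graph $G$, $\mathrm{tsp}_k(S)$ is the length (number of edge traversals, with multiplicity) of a shortest closed walk in $G$ visiting all vertices of $S$, and $W_{tsp,k}(G)=\sum_{S\subseteq V,\,|S|=k}\mathrm{tsp}_k(S)$. The Steiner distance $d_k(S)$ is the minimum number of edges of a connected subgraph (a subtree) of $G$ containing $S$, and $W_k(G)=\sum_{S\subseteq V,\,|S|=k}d_k(S)$. *)

theory Defs
  imports Main
begin

definition graph :: "'a set \<Rightarrow> 'a set set \<Rightarrow> bool" where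
  "graph V E \<longleftrightarrow> finite V \<and> (\<forall>e\<in>E. \<exists>u v. e = {u, v} \<and> u \<noteq> v \<and> u \<in> V \<and> v \<in> V)"

text \<open>A walk is a nonempty vertex list with consecutive vertices adjacent;
  its length (number of edge traversals) is length xs - 1.\<close>
definition walk :: "'a set \<Rightarrow> 'a set set \<Rightarrow> 'a list \<Rightarrow> bool" where
  "walk V E xs \<longleftrightarrow> xs \<noteq> [] \<and> set xs \<subseteq> V \<and>
     (\<forall>i < length xs - 1. {xs ! i, xs ! Suc i} \<in> E)"

definition connected_graph :: "'a set \<Rightarrow> 'a set set \<Rightarrow> bool" where
  "connected_graph V E \<longleftrightarrow> V \<noteq> {} \<and>
     (\<forall>u\<in>V. \<forall>v\<in>V. \<exists>xs. walk V E xs \<and> hd xs = u \<and> last xs = v)"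

text \<open>A cycle: closed walk v0 v1 ... vm = v0 with m >= 3 and v1,...,vm distinct.\<close>
definition cycle :: "'a set \<Rightarrow> 'a set set \<Rightarrow> 'a list \<Rightarrow> bool" where
  "cycle V E xs \<longleftrightarrow> walk V E xs \<and> length xs \<ge> 4 \<and> hd xs = last xs \<and> distinct (tl xs)"

definition tree :: "'a set \<Rightarrow> 'a set set \<Rightarrow> bool" where
  "tree V E \<longleftrightarrow> connected_graph V E \<and> \<not> (\<exists>xs. cycle V E xs)"

definition tsp :: "'a set \<Rightarrow> 'a set set \<Rightarrow> 'a set \<Rightarrow> nat" where
  "tsp V E S = (LEAST m. \<exists>xs. walk V E xs \<and> hd xs = last xs \<and> S \<subseteq> set xs \<and> length xs - 1 = m)"

definition steiner_dist :: "'a set \<Rightarrow> 'a set set \<Rightarrow> 'a set \<Rightarrow> nat" where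
  "steiner_dist V E S = (LEAST m. \<exists>V' E'. V' \<subseteq> V \<and> E' \<subseteq> E \<and> graph V' E' \<and>
      connected_graph V' E' \<and> S \<subseteq> V' \<and> card E' = m)"

definition W_tsp :: "'a set \<Rightarrow> 'a set set \<Rightarrow> nat \<Rightarrow> nat" where
  "W_tsp V E k = (\<Sum>S\<in>{S. S \<subseteq> V \<and> card S = k}. tsp V E S)"

definition W_steiner :: "'a set \<Rightarrow> 'a set set \<Rightarrow> nat \<Rightarrow> nat" where
  "W_steiner V E k = (\<Sum>S\<in>{S. S \<subseteq> V \<and> card S = k}. steiner_dist V E S)"

end

theory Submission
  imports Defs
begin

text \<open>
  Doubling the edges of an optimal Steiner tree of S gives a closed walk through S, so
  tsp(S) \<le> 2 d(S) in every connected graph. Conversely, a closed walk that is shorter than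
  every cycle traverses each of its edges at least twice. In a tree this applies to every
  closed walk, and the edges of an optimal tour form a connected subgraph containing S,
  so 2 d(S) \<le> tsp(S).

  If G is not a tree, let C be a shortest cycle, of length g. If g \<le> 2k - 3, extending C by
  pendant detours gives a closed walk of length at most 2k - 3 through k vertices, whereas
  d(S) \<ge> k - 1. If g \<ge> 2k - 2, let L be a path of g/2 + 1 consecutive edges of C and let S
  consist of the first k - 1 vertices of L and its last vertex, so tsp(S) \<le> g. A connected
  subgraph containing S with at most g/2 edges contains every path P of length < g/2 between
  two of its vertices: P followed by a path inside the subgraph is a closed walk shorter than
  every cycle, so each edge of P is traversed twice. Splitting L at its (k - 1)-st vertex
  into two such paths, the subgraph would contain all g/2 + 1 edges of L, which is absurd.
\<close>

fun walk_edges :: "'a list \<Rightarrow> 'a set set" where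
  "walk_edges (x # y # ys) = insert {x, y} (walk_edges (y # ys))"
| "walk_edges _ = {}"

lemma walk_edges_conv_nth: "walk_edges xs = (\<lambda>i. {xs ! i, xs ! Suc i}) ` {..<length xs - 1}"
  by (induction xs rule: walk_edges.induct) (simp_all add: lessThan_Suc_eq_insert_0 image_image)

lemma walk_iff_walk_edges: "walk V E xs \<longleftrightarrow> xs \<noteq> [] \<and> set xs \<subseteq> V \<and> walk_edges xs \<subseteq> E"
  unfolding walk_def walk_edges_conv_nth by blast

lemma walk_mono: "walk V' E' xs \<Longrightarrow> V' \<subseteq> V \<Longrightarrow> E' \<subseteq> E \<Longrightarrow> walk V E xs"
  unfolding walk_def by blast

lemma walk_edges_append: "walk_edges (xs @ y # ys) = walk_edges (xs @ [y]) \<union> walk_edges (y # ys)"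
  by (induction xs rule: walk_edges.induct) auto

lemma walk_edges_infix: "walk_edges ys \<subseteq> walk_edges (xs @ ys @ zs)"
proof -
  have "walk_edges ys \<subseteq> walk_edges (ys @ zs)"
    by (induction ys rule: walk_edges.induct) auto
  moreover have "walk_edges us \<subseteq> walk_edges (xs @ us)" for us
  proof (induction xs)
    case (Cons x xs)
    then show ?case by (cases "xs @ us") auto
  qed simp
  ultimately show ?thesis by blast
qed

lemma walk_edges_subset_set: "e \<in> walk_edges xs \<Longrightarrow> e \<subseteq> set xs"
  by (induction xs rule: walk_edges.induct) auto

lemma finite_walk_edges [simp]: "finite (walk_edges xs)"
  by (induction xs rule: walk_edges.induct) auto

lemma card_walk_edges_distinct: "distinct xs \<Longrightarrow> card (walk_edges xs) = length xs - 1"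
proof (induction xs rule: walk_edges.induct)
  case (1 x y ys)
  then have "{x, y} \<notin> walk_edges (y # ys)"
    using walk_edges_subset_set by fastforce
  with 1 show ?case by simp
qed auto

lemma walk_edges_backtrack:
  "walk_edges (p @ a # b # a # q) = insert {a, b} (walk_edges (p @ a # q))"
  using walk_edges_append[of p a "b # a # q"] walk_edges_append[of p a q]
  by (auto simp: insert_commute)

lemma walk_edges_join:
  assumes "xs \<noteq> []" "ys \<noteq> []" "last xs = hd ys"
  shows "walk_edges (xs @ tl ys) = walk_edges xs \<union> walk_edges ys"
proof -
  obtain y ys' where ys: "ys = y # ys'" using assms(2) by (cases ys) auto
  obtain xs' where xs: "xs = xs' @ [y]"
    using assms(1,3) ys by (metis append_butlast_last_id list.sel(1))
  show ?thesis using walk_edges_append[of xs' y ys'] unfolding xs ys by simp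
qed

lemma walk_join:
  assumes "walk V E xs" "walk V E ys" "last xs = hd ys"
  shows "walk V E (xs @ tl ys)" and "hd (xs @ tl ys) = hd xs" and "last (xs @ tl ys) = last ys"
proof -
  have ne: "xs \<noteq> []" "ys \<noteq> []" using assms(1,2) unfolding walk_iff_walk_edges by auto
  show "walk V E (xs @ tl ys)"
    using assms walk_edges_join[OF ne assms(3)] unfolding walk_iff_walk_edges
    by (auto dest: list.set_sel(2))
  show "hd (xs @ tl ys) = hd xs" using ne by simp
  show "last (xs @ tl ys) = last ys" using ne assms(3) by (cases ys; cases "tl ys") auto
qed

lemma graph_finite_edges: "graph V E \<Longrightarrow> finite E"
  unfolding graph_def by (auto intro: finite_subset[of E "Pow V"])

lemma graph_no_loop: "graph V E \<Longrightarrow> {a} \<notin> E"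
  unfolding graph_def by (auto simp: doubleton_eq_iff)

lemma closed_list_simple_infix:
  "2 \<le> length xs \<Longrightarrow> hd xs = last xs \<Longrightarrow>
   \<exists>p s q. xs = p @ s @ q \<and> 2 \<le> length s \<and> hd s = last s \<and> distinct (tl s)"
proof (induction "length xs" arbitrary: xs rule: less_induct)
  case less
  show ?case
  proof (cases "distinct (tl xs)")
    case True
    then show ?thesis using less.prems by (intro exI[of _ "[]"] exI[of _ xs]) auto
  next
    case False
    then obtain a b c y where tl: "tl xs = a @ [y] @ b @ [y] @ c"
      using not_distinct_decomp by blast
    have xs: "xs = hd xs # tl xs" using less.prems by (cases xs) auto
    have "length (y # b @ [y]) < length xs"
      using arg_cong[OF tl, of length] less.prems by simp
    then obtain p s q where "y # b @ [y] = p @ s @ q" "2 \<le> length s" "hd s = last s"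
      "distinct (tl s)"
      using less.hyps[of "y # b @ [y]"] by auto
    moreover from this(1) have "xs = (hd xs # a @ p) @ s @ (q @ c)"
      using tl xs by (metis append.assoc append_Cons append_Nil)
    ultimately show ?thesis by blast
  qed
qed

lemma closed_walk_double_edges:
  assumes "graph V E"
  shows "walk V E xs \<Longrightarrow> hd xs = last xs \<Longrightarrow> \<forall>c. cycle V E c \<longrightarrow> length xs < length c
         \<Longrightarrow> 2 * card (walk_edges xs) \<le> length xs - 1"
proof (induction "length xs" arbitrary: xs rule: less_induct)
  case less
  show ?case
  proof (cases "2 \<le> length xs")
    case False
    then have "walk_edges xs = {}" by (cases xs rule: walk_edges.cases) auto
    then show ?thesis by simp
  next
    case True
    then obtain p s q where s: "xs = p @ s @ q" "2 \<le> length s" "hd s = last s" "distinct (tl s)"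
      using closed_list_simple_infix less.prems(2) by blast
    have walk_s: "walk V E s"
      using less.prems(1) walk_edges_infix[of s p q] s(1,2) unfolding walk_iff_walk_edges by auto
    \<comment> \<open>The closed infix s is a loop (impossible), a backtrack a b a (delete it and use
      induction), or a cycle (too long).\<close>
    consider "length s = 2" | "length s = 3" | "4 \<le> length s" using s(2) by linarith
    then show ?thesis
    proof cases
      case 1
      then obtain a where "s = [a, a]" using s(3) by (auto simp: length_Suc_conv numeral_2_eq_2)
      then show ?thesis using walk_s graph_no_loop[OF assms] unfolding walk_iff_walk_edges by auto
    next
      case 2
      then obtain a b where sa: "s = [a, b, a]" using s(3) by (auto simp: length_Suc_conv numeral_3_eq_3)
      define ys where "ys = p @ a # q"
      have edges: "walk_edges xs = insert {a, b} (walk_edges ys)"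
        unfolding ys_def s(1) sa using walk_edges_backtrack by simp
      have len: "length xs = length ys + 2" unfolding ys_def s(1) sa by simp
      have "walk V E ys"
        using less.prems(1) edges unfolding walk_iff_walk_edges ys_def s(1) sa by auto
      moreover have "hd ys = last ys"
        using less.prems(2) unfolding ys_def s(1) sa by (cases p; cases q) auto
      moreover have "\<forall>c. cycle V E c \<longrightarrow> length ys < length c" using less.prems(3) len by auto
      ultimately have "2 * card (walk_edges ys) \<le> length ys - 1"
        using less.hyps len by simp
      moreover have "card (walk_edges xs) \<le> Suc (card (walk_edges ys))"
        unfolding edges by (simp add: card_insert_if)
      moreover have "1 \<le> length ys" unfolding ys_def by simp
      ultimately show ?thesis using len by linarith
    next
      case 3
      then have "cycle V E s" using walk_s s(3,4) unfolding cycle_def by simp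
      then show ?thesis using less.prems(3) s(1) by fastforce
    qed
  qed
qed

lemma walk_crosses_boundary:
  "walk_edges xs \<subseteq> E \<Longrightarrow> xs \<noteq> [] \<Longrightarrow> hd xs \<in> A \<Longrightarrow> last xs \<notin> A \<Longrightarrow>
   \<exists>a b. a \<in> A \<and> b \<notin> A \<and> {a, b} \<in> E \<and> b \<in> set xs"
proof (induction xs rule: walk_edges.induct)
  case (1 x y ys)
  then show ?case by (cases "y \<in> A") fastforce+
qed auto

lemma walk_shortcut:
  "walk V E xs \<Longrightarrow> \<exists>ys. walk V E ys \<and> distinct ys \<and> hd ys = hd xs \<and> last ys = last xs"
proof (induction "length xs" arbitrary: xs rule: less_induct)
  case less
  show ?case
  proof (cases "distinct xs")
    case True
    then show ?thesis using less.prems by blast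
  next
    case False
    then obtain a b c y where xs: "xs = a @ [y] @ b @ [y] @ c" using not_distinct_decomp by blast
    define xs' where "xs' = a @ y # c"
    have "walk_edges (a @ [y]) \<subseteq> walk_edges xs"
      using walk_edges_infix[of "a @ [y]" "[]" "b @ [y] @ c"] unfolding xs by simp
    moreover have "walk_edges (y # c) \<subseteq> walk_edges xs"
      using walk_edges_infix[of "y # c" "a @ [y] @ b" "[]"] unfolding xs by simp
    ultimately have "walk_edges xs' \<subseteq> walk_edges xs"
      using walk_edges_append[of a y c] unfolding xs'_def by blast
    then have "walk V E xs'"
      using less.prems unfolding walk_iff_walk_edges xs'_def xs by auto
    moreover have "length xs' < length xs" unfolding xs'_def xs by simp
    moreover have "hd xs' = hd xs" "last xs' = last xs" unfolding xs'_def xs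
      by (cases a; simp) (cases c; simp)
    ultimately show ?thesis using less.hyps by metis
  qed
qed

lemma closed_walk_add_pendant:
  assumes "connected_graph V E" "walk V E w" "hd w = last w" "set w \<noteq> V"
  obtains b w' where "b \<notin> set w" "walk V E w'" "hd w' = last w'" "set w' = insert b (set w)"
    "length w' = length w + 2" "card (walk_edges w') = Suc (card (walk_edges w))"
proof -
  have w: "w \<noteq> []" "set w \<subseteq> V" "walk_edges w \<subseteq> E"
    using assms(2) unfolding walk_iff_walk_edges by auto
  obtain b0 where b0: "b0 \<in> V" "b0 \<notin> set w" using w(2) assms(4) by blast
  obtain xs where xs: "walk V E xs" "hd xs = hd w" "last xs = b0"
    using assms(1) b0(1) w(1,2) unfolding connected_graph_def by (meson hd_in_set subsetD)
  then obtain a b where ab: "a \<in> set w" "b \<notin> set w" "{a, b} \<in> E" "b \<in> set xs"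
    using walk_crosses_boundary[of xs E "set w"] b0(2) w(1) unfolding walk_iff_walk_edges by auto
  have "b \<in> V" using ab(4) xs(1) unfolding walk_iff_walk_edges by blast
  obtain p r where w_split: "w = p @ a # r" using ab(1) split_list by metis
  define w' where "w' = p @ a # b # a # r"
  have edges: "walk_edges w' = insert {a, b} (walk_edges w)"
    unfolding w'_def w_split by (rule walk_edges_backtrack)
  have "{a, b} \<notin> walk_edges w" using ab(2) walk_edges_subset_set by blast
  then have "card (walk_edges w') = Suc (card (walk_edges w))" unfolding edges by simp
  moreover have "set w' = insert b (set w)" unfolding w'_def w_split by auto
  moreover have "walk V E w'"
    using w \<open>b \<in> V\<close> ab(3) edges calculation(2) unfolding walk_iff_walk_edges w'_def by auto
  moreover have "hd w' = last w'" using assms(3) unfolding w'_def w_split by (cases p) auto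
  moreover have "length w' = length w + 2" unfolding w'_def w_split by simp
  ultimately show ?thesis using that ab(2) by blast
qed

lemma closed_walk_extend:
  assumes "finite V" "connected_graph V E" "walk V E w" "hd w = last w"
    and "card (set w) + d \<le> card V"
  shows "\<exists>w'. walk V E w' \<and> hd w' = last w' \<and> set w \<subseteq> set w' \<and> card (set w') = card (set w) + d
    \<and> length w' = length w + 2 * d \<and> card (walk_edges w') = card (walk_edges w) + d"
  using assms(5)
proof (induction d)
  case 0
  show ?case using assms(3,4) by (intro exI[of _ w]) simp
next
  case (Suc d)
  then obtain w' where w': "walk V E w'" "hd w' = last w'" "set w \<subseteq> set w'"
    "card (set w') = card (set w) + d" "length w' = length w + 2 * d"
    "card (walk_edges w') = card (walk_edges w) + d"
    by (metis Suc_leD add_Suc_right)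
  have "set w' \<noteq> V" using w'(4) Suc.prems by force
  obtain b w'' where w'': "b \<notin> set w'" "walk V E w''" "hd w'' = last w''"
    "set w'' = insert b (set w')" "length w'' = length w' + 2"
    "card (walk_edges w'') = Suc (card (walk_edges w'))"
    by (rule closed_walk_add_pendant[OF assms(2) w'(1,2) \<open>set w' \<noteq> V\<close>])
  have "card (set w'') = Suc (card (set w'))" using w''(1,4) by simp
  moreover have "set w \<subseteq> set w''" using w'(3) w''(4) by blast
  ultimately show ?case using w' w'' by (intro exI[of _ w'']) simp
qed

lemma connected_graph_spanning_closed_walk:
  assumes "finite V" "connected_graph V E"
  obtains w where "walk V E w" "hd w = last w" "set w = V"
    "length w - 1 = 2 * (card V - 1)" "card (walk_edges w) = card V - 1"
proof -
  obtain r where r: "r \<in> V" using assms(2) unfolding connected_graph_def by blast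
  then have "walk V E [r]" unfolding walk_iff_walk_edges by simp
  moreover have "0 < card V" using assms(1) r card_gt_0_iff by blast
  ultimately obtain w where w: "walk V E w" "hd w = last w" "card (set w) = card V"
    "length w = 1 + 2 * (card V - 1)" "card (walk_edges w) = card V - 1"
    using closed_walk_extend[OF assms, of "[r]" "card V - 1"] by auto
  moreover have "set w = V"
    using w(1,3) assms(1) card_subset_eq unfolding walk_iff_walk_edges by blast
  ultimately show ?thesis using that by simp
qed

lemma connected_graph_card_le_Suc_card_edges:
  assumes "finite V" "connected_graph V E" "finite E"
  shows "card V \<le> Suc (card E)"
proof -
  obtain w where "walk V E w" "card (walk_edges w) = card V - 1"
    using connected_graph_spanning_closed_walk[OF assms(1,2)] by blast
  then have "card V - 1 \<le> card E"
    using assms(3) card_mono unfolding walk_iff_walk_edges by metis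
  then show ?thesis by linarith
qed

lemma tsp_le: "walk V E w \<Longrightarrow> hd w = last w \<Longrightarrow> S \<subseteq> set w \<Longrightarrow> tsp V E S \<le> length w - 1"
  unfolding tsp_def by (rule Least_le) blast

lemma tsp_attained:
  assumes "finite V" "connected_graph V E" "S \<subseteq> V"
  obtains w where "walk V E w" "hd w = last w" "S \<subseteq> set w" "length w - 1 = tsp V E S"
proof -
  obtain w where "walk V E w" "hd w = last w" "set w = V"
    using connected_graph_spanning_closed_walk[OF assms(1,2)] by blast
  then have "\<exists>m w. walk V E w \<and> hd w = last w \<and> S \<subseteq> set w \<and> length w - 1 = m"
    using assms(3) by blast
  from LeastI_ex[OF this] show ?thesis using that unfolding tsp_def by blast
qed

lemma steiner_dist_le:
  "V' \<subseteq> V \<Longrightarrow> E' \<subseteq> E \<Longrightarrow> graph V' E' \<Longrightarrow> connected_graph V' E' \<Longrightarrow> S \<subseteq> V'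
   \<Longrightarrow> steiner_dist V E S \<le> card E'"
  unfolding steiner_dist_def by (rule Least_le) blast

lemma steiner_dist_attained:
  assumes "graph V E" "connected_graph V E" "S \<subseteq> V"
  obtains V' E' where "V' \<subseteq> V" "E' \<subseteq> E" "graph V' E'" "connected_graph V' E'" "S \<subseteq> V'"
    "card E' = steiner_dist V E S"
proof -
  have "\<exists>m V' E'. V' \<subseteq> V \<and> E' \<subseteq> E \<and> graph V' E' \<and> connected_graph V' E' \<and> S \<subseteq> V'
      \<and> card E' = m"
    using assms by blast
  from LeastI_ex[OF this] show ?thesis using that unfolding steiner_dist_def by blast
qed

lemma card_le_Suc_steiner_dist:
  assumes "graph V E" "connected_graph V E" "S \<subseteq> V"
  shows "card S \<le> Suc (steiner_dist V E S)"
proof -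
  obtain V' E' where H: "graph V' E'" "connected_graph V' E'" "S \<subseteq> V'"
    "card E' = steiner_dist V E S"
    using steiner_dist_attained[OF assms] by metis
  have "finite V'" using H(1) unfolding graph_def by blast
  then have "card S \<le> card V'" using H(3) card_mono by blast
  also have "\<dots> \<le> Suc (card E')"
    using connected_graph_card_le_Suc_card_edges[OF \<open>finite V'\<close> H(2) graph_finite_edges[OF H(1)]] .
  finally show ?thesis using H(4) by simp
qed

lemma tsp_le_double_steiner_dist:
  assumes "graph V E" "connected_graph V E" "S \<subseteq> V"
  shows "tsp V E S \<le> 2 * steiner_dist V E S"
proof -
  obtain V' E' where H: "V' \<subseteq> V" "E' \<subseteq> E" "graph V' E'" "connected_graph V' E'" "S \<subseteq> V'"
    "card E' = steiner_dist V E S"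
    using steiner_dist_attained[OF assms] by metis
  have "finite V'" using H(3) unfolding graph_def by blast
  obtain w where w: "walk V' E' w" "hd w = last w" "set w = V'" "length w - 1 = 2 * (card V' - 1)"
    using connected_graph_spanning_closed_walk[OF \<open>finite V'\<close> H(4)] by metis
  have "tsp V E S \<le> length w - 1"
    using tsp_le[OF walk_mono[OF w(1) H(1,2)] w(2)] w(3) H(5) by blast
  moreover have "card V' \<le> Suc (card E')"
    using connected_graph_card_le_Suc_card_edges[OF \<open>finite V'\<close> H(4) graph_finite_edges[OF H(3)]] .
  ultimately show ?thesis using w(4) H(6) by linarith
qed

lemma graph_walk_trace:
  assumes "graph V E" "walk V E w"
  shows "graph (set w) (walk_edges w)"
proof -
  have "\<exists>u v. e = {u, v} \<and> u \<noteq> v \<and> u \<in> set w \<and> v \<in> set w" if "e \<in> walk_edges w" for e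
  proof -
    have "e \<in> E" using that assms(2) unfolding walk_iff_walk_edges by blast
    then obtain u v where "e = {u, v}" "u \<noteq> v" using assms(1) unfolding graph_def by blast
    with walk_edges_subset_set[OF that] show ?thesis by blast
  qed
  then show ?thesis unfolding graph_def by blast
qed

lemma connected_graph_closed_walk_trace:
  assumes "walk V E w" "hd w = last w"
  shows "connected_graph (set w) (walk_edges w)"
  unfolding connected_graph_def
proof (intro conjI ballI)
  show "set w \<noteq> {}" using assms(1) unfolding walk_iff_walk_edges by simp
next
  fix u v assume "u \<in> set w" "v \<in> set w"
  then obtain a b c d where u: "w = a @ u # b" and v: "w = c @ v # d" by (meson split_list)
  have "walk (set w) (walk_edges w) (u # b)"
    using walk_edges_infix[of "u # b" a "[]"] unfolding walk_iff_walk_edges u by auto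
  moreover have "walk (set w) (walk_edges w) (c @ [v])"
    using walk_edges_infix[of "c @ [v]" "[]" d] unfolding walk_iff_walk_edges v by auto
  moreover have "last (u # b) = last w" using u by simp
  moreover have "hd (c @ [v]) = hd w" using v by (cases c) simp_all
  ultimately show "\<exists>xs. walk (set w) (walk_edges w) xs \<and> hd xs = u \<and> last xs = v"
    using walk_join assms(2) by (metis last_snoc list.sel(1))
qed

lemma tree_double_steiner_dist_le_tsp:
  assumes "graph V E" "tree V E" "S \<subseteq> V"
  shows "2 * steiner_dist V E S \<le> tsp V E S"
proof -
  have conn: "connected_graph V E" and acyclic: "\<forall>c. \<not> cycle V E c"
    using assms(2) unfolding tree_def by auto
  have "finite V" using assms(1) unfolding graph_def by blast
  obtain w where w: "walk V E w" "hd w = last w" "S \<subseteq> set w" "length w - 1 = tsp V E S"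
    using tsp_attained[OF \<open>finite V\<close> conn assms(3)] by metis
  have "set w \<subseteq> V" "walk_edges w \<subseteq> E" using w(1) unfolding walk_iff_walk_edges by auto
  then have "steiner_dist V E S \<le> card (walk_edges w)"
    using steiner_dist_le graph_walk_trace[OF assms(1) w(1)]
      connected_graph_closed_walk_trace[OF w(1,2)] w(3) by blast
  moreover have "2 * card (walk_edges w) \<le> length w - 1"
    using closed_walk_double_edges[OF assms(1) w(1,2)] acyclic by blast
  ultimately show ?thesis using w(4) by linarith
qed

lemma tree_tsp_eq_double_steiner_dist:
  assumes "graph V E" "tree V E" "S \<subseteq> V"
  shows "tsp V E S = 2 * steiner_dist V E S"
  using tsp_le_double_steiner_dist tree_double_steiner_dist_le_tsp assms
  unfolding tree_def by (metis order_antisym)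

lemma short_path_in_small_connected_subgraph:
  assumes "graph V E" and girth: "\<forall>c. cycle V E c \<longrightarrow> g < length c"
    and sub: "V' \<subseteq> V" "E' \<subseteq> E" "graph V' E'" "connected_graph V' E'"
    and small: "2 * card E' \<le> g"
    and P: "walk V E P" "distinct P" "hd P \<in> V'" "last P \<in> V'" "2 * (length P - 1) < g"
  shows "walk_edges P \<subseteq> E'"
proof -
  obtain Q0 where "walk V' E' Q0" "hd Q0 = last P" "last Q0 = hd P"
    using sub(4) P(3,4) unfolding connected_graph_def by blast
  then obtain Q where Q: "walk V' E' Q" "distinct Q" "hd Q = last P" "last Q = hd P"
    using walk_shortcut by metis
  define a where "a = length P - 1"
  define b where "b = length Q - 1"
  have ne: "P \<noteq> []" "Q \<noteq> []" using P(1) Q(1) unfolding walk_iff_walk_edges by auto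
  have card_P: "card (walk_edges P) = a" unfolding a_def by (rule card_walk_edges_distinct[OF P(2)])
  have card_Q: "card (walk_edges Q) = b" unfolding b_def by (rule card_walk_edges_distinct[OF Q(2)])
  have Q_E': "walk_edges Q \<subseteq> E'" using Q(1) unfolding walk_iff_walk_edges by blast
  then have "b \<le> card E'" using card_Q card_mono[OF graph_finite_edges[OF sub(3)]] by metis
  \<comment> \<open>The closed walk P Q is shorter than every cycle, so it traverses each edge twice;
    counting edges then forces the edges of P onto Q.\<close>
  define W where "W = P @ tl Q"
  have "walk V E W" "hd W = last W"
    using walk_join[OF P(1) walk_mono[OF Q(1) sub(1,2)] Q(3)[symmetric]] Q(4) unfolding W_def
    by auto
  moreover have len_W: "length W - 1 = a + b"
    using ne unfolding W_def a_def b_def by (cases P; cases Q) auto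
  moreover have "\<forall>c. cycle V E c \<longrightarrow> length W < length c"
    using girth len_W P(5) small \<open>b \<le> card E'\<close> unfolding a_def by fastforce
  ultimately have "2 * card (walk_edges P \<union> walk_edges Q) \<le> a + b"
    using closed_walk_double_edges[OF assms(1)] walk_edges_join[OF ne Q(3)[symmetric]]
    unfolding W_def by metis
  moreover have "card (walk_edges P \<union> walk_edges Q) + card (walk_edges P \<inter> walk_edges Q) = a + b"
    using card_Un_Int[of "walk_edges P" "walk_edges Q"] card_P card_Q by simp
  moreover have "card (walk_edges P \<inter> walk_edges Q) \<le> b"
    using card_Q card_mono[of "walk_edges Q"] by (metis finite_walk_edges inf_le2)
  ultimately have "card (walk_edges P) \<le> card (walk_edges P \<inter> walk_edges Q)"
    using card_P by linarith
  then have "walk_edges P \<inter> walk_edges Q = walk_edges P"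
    by (intro card_seteq) auto
  then show ?thesis using Q_E' by blast
qed

lemma cycle_butlast:
  assumes "cycle V E C"
  shows "distinct (butlast C)" and "set (butlast C) = set C"
proof -
  have len: "4 \<le> length C" and closed: "hd C = last C" and dist: "distinct (tl C)"
    using assms unfolding cycle_def by auto
  obtain x r where C: "C = x # r" using len by (cases C) auto
  moreover have "r \<noteq> []" using len C by auto
  ultimately obtain t where "C = x # t @ [x]"
    using closed by (metis append_butlast_last_id last_ConsR list.sel(1))
  then show "distinct (butlast C)" and "set (butlast C) = set C"
    using dist by (auto simp: butlast_append)
qed

lemma tsp_less_double_steiner_dist_if_short_cycle:
  assumes G: "graph V E" "connected_graph V E" and C: "cycle V E C"
    and short: "length C - 1 \<le> 2 * k - 3" and "k \<le> card V"
  obtains S where "S \<subseteq> V" "card S = k" "tsp V E S < 2 * steiner_dist V E S"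
proof -
  define g where "g = length C - 1"
  define n where "n = max g k"
  have "finite V" using G(1) unfolding graph_def by blast
  have walk_C: "walk V E C" "hd C = last C" and "4 \<le> length C"
    using C unfolding cycle_def by auto
  have card_C: "card (set C) = g"
    using cycle_butlast[OF C] distinct_card unfolding g_def by (metis length_butlast)
  have "set C \<subseteq> V" using walk_C(1) unfolding walk_iff_walk_edges by blast
  then have "g \<le> card V" using card_C card_mono[OF \<open>finite V\<close>] by metis
  then have "card (set C) + (n - g) \<le> card V" using card_C assms(5) unfolding n_def by simp
  then obtain w where w: "walk V E w" "hd w = last w" "card (set w) = card (set C) + (n - g)"
    "length w = length C + 2 * (n - g)"
    using closed_walk_extend[OF \<open>finite V\<close> G(2) walk_C] by metis
  have "k \<le> card (set w)" using w(3) card_C unfolding n_def by simp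
  then obtain S where S: "S \<subseteq> set w" "card S = k" using obtain_subset_with_card_n by metis
  have "S \<subseteq> V" using S(1) w(1) unfolding walk_iff_walk_edges by blast
  have "tsp V E S \<le> length w - 1" using tsp_le[OF w(1,2) S(1)] .
  also have "\<dots> \<le> 2 * k - 3"
    using w(4) short \<open>4 \<le> length C\<close> unfolding n_def g_def by (auto simp: max_def)
  finally have "tsp V E S \<le> 2 * k - 3" .
  moreover have "k \<le> Suc (steiner_dist V E S)"
    using card_le_Suc_steiner_dist[OF G \<open>S \<subseteq> V\<close>] S(2) by simp
  moreover have "3 \<le> k" using short \<open>4 \<le> length C\<close> by linarith
  ultimately have "tsp V E S < 2 * steiner_dist V E S" by linarith
  with that \<open>S \<subseteq> V\<close> S(2) show ?thesis by blast
qed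

lemma girth_less_double_steiner_dist:
  assumes G: "graph V E" "connected_graph V E" and girth: "\<forall>c. cycle V E c \<longrightarrow> g < length c"
    and L: "walk V E L" "distinct L" "i < length L" "g < 2 * (length L - 1)"
    and short: "2 * i < g" "2 * (length L - 1 - i) < g"
    and S: "S \<subseteq> V" "hd L \<in> S" "L ! i \<in> S" "last L \<in> S"
  shows "g < 2 * steiner_dist V E S"
proof (rule ccontr)
  assume "\<not> g < 2 * steiner_dist V E S"
  define T where "T = take (Suc i) L"
  define D where "D = drop i L"
  have "T \<noteq> []" "D \<noteq> []" "last T = L ! i" "hd D = L ! i" "last D = last L"
    using L(3) unfolding T_def D_def by (simp_all add: take_Suc_conv_app_nth hd_drop_conv_nth)
  moreover have "hd T = hd L" using L(3) unfolding T_def by (cases L) auto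
  moreover have "L = T @ tl D" unfolding T_def D_def by (metis append_take_drop_id drop_Suc tl_drop)
  ultimately have edges_L: "walk_edges L = walk_edges T \<union> walk_edges D"
    using walk_edges_join[of T D] by metis
  have "set T \<subseteq> set L" "set D \<subseteq> set L"
    unfolding T_def D_def by (simp_all add: set_take_subset set_drop_subset)
  then have "walk V E T" "walk V E D"
    using L(1) edges_L \<open>T \<noteq> []\<close> \<open>D \<noteq> []\<close> unfolding walk_iff_walk_edges by auto
  obtain V' E' where H: "V' \<subseteq> V" "E' \<subseteq> E" "graph V' E'" "connected_graph V' E'" "S \<subseteq> V'"
    "card E' = steiner_dist V E S"
    by (rule steiner_dist_attained[OF G S(1)])
  have small: "2 * card E' \<le> g" using \<open>\<not> g < 2 * steiner_dist V E S\<close> H(6) by simp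
  note short_path = short_path_in_small_connected_subgraph[OF G(1) girth H(1-4) small]
  have "walk_edges T \<subseteq> E'"
    using short_path[OF \<open>walk V E T\<close>] L(2,3) short(1) S(2,3) H(5) \<open>hd T = hd L\<close> \<open>last T = L ! i\<close>
    unfolding T_def by auto
  moreover have "walk_edges D \<subseteq> E'"
    using short_path[OF \<open>walk V E D\<close>] L(2) short(2) S(3,4) H(5) \<open>hd D = L ! i\<close> \<open>last D = last L\<close>
    unfolding D_def by auto
  ultimately have "card (walk_edges L) \<le> card E'"
    using edges_L card_mono[OF graph_finite_edges[OF H(3)]] by (metis Un_subset_iff)
  then show False using card_walk_edges_distinct[OF L(2)] L(4) small by linarith
qed

lemma tsp_less_double_steiner_dist_if_long_girth:
  assumes G: "graph V E" "connected_graph V E" and C: "cycle V E C"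
    and shortest: "\<forall>c. cycle V E c \<longrightarrow> length C \<le> length c"
    and long: "2 * k - 2 \<le> length C - 1" and "4 \<le> k"
  obtains S where "S \<subseteq> V" "card S = k" "tsp V E S < 2 * steiner_dist V E S"
proof -
  define g where "g = length C - 1"
  define L where "L = take (g div 2 + 2) C"
  define S where "S = insert (last L) (set (take (k - 1) L))"
  have walk_C: "walk V E C" "hd C = last C" using C unfolding cycle_def by auto
  have "g div 2 + 2 < length C" using long assms(6) unfolding g_def by linarith
  then have len_L: "length L = g div 2 + 2" unfolding L_def by simp
  have dist_L: "distinct L"
    using cycle_butlast(1)[OF C] \<open>g div 2 + 2 < length C\<close> unfolding L_def
    by (metis distinct_take take_butlast)
  have "set L \<subseteq> set C" unfolding L_def by (rule set_take_subset)
  have walk_L: "walk V E L"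
    using walk_C(1) walk_edges_infix[of L "[]" "drop (g div 2 + 2) C"] \<open>set L \<subseteq> set C\<close>
    unfolding walk_iff_walk_edges L_def by fastforce
  have "k - 1 < length L" using len_L long assms(6) unfolding g_def by linarith
  then have "last L \<in> set (drop (k - 1) L)" by (metis drop_eq_Nil last_drop last_in_set not_le)
  then have "last L \<notin> set (take (k - 1) L)"
    using dist_L set_take_disj_set_drop_if_distinct by fastforce
  then have card_S: "card S = k"
    using distinct_card[of "take (k - 1) L"] dist_L \<open>k - 1 < length L\<close> assms(6)
    unfolding S_def by simp
  have "L \<noteq> []" using len_L by auto
  then have "S \<subseteq> set C"
    using \<open>set L \<subseteq> set C\<close> set_take_subset[of "k - 1" L] last_in_set unfolding S_def by blast
  then have "S \<subseteq> V" using walk_C(1) unfolding walk_iff_walk_edges by blast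
  have "tsp V E S \<le> g" using tsp_le[OF walk_C \<open>S \<subseteq> set C\<close>] unfolding g_def .
  moreover have "g < 2 * steiner_dist V E S"
  proof (rule girth_less_double_steiner_dist[OF G _ walk_L dist_L, of g "k - 2"])
    show "\<forall>c. cycle V E c \<longrightarrow> g < length c"
      using shortest \<open>g div 2 + 2 < length C\<close> unfolding g_def by fastforce
    show "k - 2 < length L" "2 * (k - 2) < g" "g < 2 * (length L - 1)"
      using len_L long assms(6) unfolding g_def by auto
    \<comment> \<open>This is where k \<ge> 4 is needed; for k = 3 the theorem fails on the 4-cycle.\<close>
    have "2 * (g div 2) \<le> g" "2 * k - 2 \<le> g" using long unfolding g_def by simp_all
    then show "2 * (length L - 1 - (k - 2)) < g" using len_L assms(6) by simp
    show "S \<subseteq> V" "last L \<in> S" by (fact \<open>S \<subseteq> V\<close>) (simp add: S_def)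
    have "take (k - 1) L ! 0 = hd L" "take (k - 1) L ! (k - 2) = L ! (k - 2)"
      using \<open>L \<noteq> []\<close> assms(6) by (simp_all add: hd_conv_nth)
    moreover have "0 < length (take (k - 1) L)" "k - 2 < length (take (k - 1) L)"
      using \<open>k - 1 < length L\<close> assms(6) by simp_all
    ultimately show "hd L \<in> S" "L ! (k - 2) \<in> S" unfolding S_def by (metis insertCI nth_mem)+
  qed
  ultimately have "tsp V E S < 2 * steiner_dist V E S" by linarith
  with that \<open>S \<subseteq> V\<close> card_S show ?thesis by blast
qed

lemma not_tree_tsp_less_double_steiner_dist:
  assumes G: "graph V E" "connected_graph V E" and "\<not> tree V E" and "4 \<le> k" "k \<le> card V"
  obtains S where "S \<subseteq> V" "card S = k" "tsp V E S < 2 * steiner_dist V E S"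
proof -
  obtain C where C: "cycle V E C" and shortest: "\<forall>c. cycle V E c \<longrightarrow> length C \<le> length c"
    using assms(2,3) ex_has_least_nat[of "cycle V E" _ length] unfolding tree_def by blast
  show ?thesis
  proof (cases "length C - 1 \<le> 2 * k - 3")
    case True
    show ?thesis
      using that by (rule tsp_less_double_steiner_dist_if_short_cycle[OF G C True assms(5)])
  next
    case False
    then have long: "2 * k - 2 \<le> length C - 1" using assms(4) by linarith
    show ?thesis
      using that by (rule tsp_less_double_steiner_dist_if_long_girth[OF G C shortest long assms(4)])
  qed
qed

theorem proposition2:
  fixes k :: nat
  assumes "k \<ge> 4"
  shows "(\<forall>(V :: 'a set) E. graph V E \<and> tree V E \<and> card V \<ge> k
            \<longrightarrow> W_tsp V E k = 2 * W_steiner V E k)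
       \<and> (\<forall>(V :: 'a set) E. graph V E \<and> connected_graph V E \<and> \<not> tree V E \<and> card V \<ge> k
            \<longrightarrow> W_tsp V E k < 2 * W_steiner V E k)"
proof (intro conjI allI impI)
  fix V :: "'a set" and E
  assume "graph V E \<and> tree V E \<and> card V \<ge> k"
  then have "tsp V E S = 2 * steiner_dist V E S" if "S \<subseteq> V" for S
    using that tree_tsp_eq_double_steiner_dist by blast
  then show "W_tsp V E k = 2 * W_steiner V E k"
    unfolding W_tsp_def W_steiner_def sum_distrib_left by (intro sum.cong) auto
next
  fix V :: "'a set" and E
  assume "graph V E \<and> connected_graph V E \<and> \<not> tree V E \<and> card V \<ge> k"
  then have G: "graph V E" "connected_graph V E" "\<not> tree V E" "k \<le> card V" by auto
  obtain S0 where "S0 \<subseteq> V" "card S0 = k" "tsp V E S0 < 2 * steiner_dist V E S0"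
    by (rule not_tree_tsp_less_double_steiner_dist[OF G(1-3) assms G(4)])
  moreover have "finite {S. S \<subseteq> V \<and> card S = k}" using G(1) unfolding graph_def by simp
  moreover have "\<forall>S \<in> {S. S \<subseteq> V \<and> card S = k}. tsp V E S \<le> 2 * steiner_dist V E S"
    using tsp_le_double_steiner_dist[OF G(1,2)] by simp
  ultimately have "(\<Sum>S \<in> {S. S \<subseteq> V \<and> card S = k}. tsp V E S)
      < (\<Sum>S \<in> {S. S \<subseteq> V \<and> card S = k}. 2 * steiner_dist V E S)"
    by (intro sum_strict_mono_ex1) auto
  then show "W_tsp V E k < 2 * W_steiner V E k"
    unfolding W_tsp_def W_steiner_def sum_distrib_left .
qed

end
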